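(* Let $0\le\beta\le1$. Then $C_\beta[f]\in\mathcal{C}$ for every $f\in\mathcal{C}$.
   Context: $\mathbb{D}$ is the open unit disk; $\mathcal{A}$ the class of analytic $f$ on $\mathbb{D}$ with $f(0)=0$, $f'(0)=1$. $\mathcal{K}$ is the class of $f\in\mathcal{A}$ with $f'\neq0$ and $\mathrm{Re}\,(1+zf''(z)/f'(z))>0$ on $\mathbb{D}$ (normalized convex functions). $\mathcal{C}$ is the class of close-to-convex functions: $f\in\mathcal{A}$ such that $\mathrm{Re}\,(e^{i\alpha}f'(z)/g'(z))>0$ on $\mathbb{D}$ for some $g\in\mathcal{K}$ and some real $\alpha\in(-\pi/2,\pi/2)$. For $\beta\ge0$ and $f$ analytic on $\mathbb{D}$ with $f(0)=0$, $C_\beta[f](z)=\int_0^z \frac{f(w)}{w(1-w)^\beta}\,dw$ (principal branch of $(1-w)^\beta$). *)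

theory Defs
  imports "HOL-Complex_Analysis.Complex_Analysis"
begin

abbreviation unit_disk :: "complex set" where
  "unit_disk \<equiv> ball 0 1"

definition classA :: "(complex \<Rightarrow> complex) set" where
  "classA = {f. f holomorphic_on unit_disk \<and> f 0 = 0 \<and> deriv f 0 = 1}"

definition classK :: "(complex \<Rightarrow> complex) set" where
  "classK = {f. f \<in> classA \<and>
     (\<forall>z\<in>unit_disk. deriv f z \<noteq> 0 \<and>
        Re (1 + z * deriv (deriv f) z / deriv f z) > 0)}"

definition classC :: "(complex \<Rightarrow> complex) set" where
  "classC = {f. f \<in> classA \<and>
     (\<exists>g\<in>classK. \<exists>\<alpha>::real. -(pi/2) < \<alpha> \<and> \<alpha> < pi/2 \<and>
        (\<forall>z\<in>unit_disk. Re (exp (\<i> * of_real \<alpha>) * deriv f z / deriv g z) > 0))}"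

text \<open>The value of the integrand at the single point w = 0 does not affect the integral.\<close>
definition Cbeta :: "real \<Rightarrow> (complex \<Rightarrow> complex) \<Rightarrow> complex \<Rightarrow> complex" where
  "Cbeta \<beta> f z = contour_integral (linepath 0 z)
      (\<lambda>w. f w / (w * (1 - w) powr (of_real \<beta>)))"

end

theory Submission
  imports Defs
begin

(*
  Write f(z)/z as over_z f. The derivative of C_beta[f] is over_z f / (1 - z)^beta, hence
    1 + z C_beta[g]''/C_beta[g]' = z g'/g + beta z/(1 - z)   and   C_beta[f]'/C_beta[g]' = f/g.
  For convex g the Marx-Strohhacker theorem Re (z g'/g) > 1/2, obtained from Jack's lemma, and
  Re (z/(1 - z)) > -1/2 show that C_beta[g] is convex when beta <= 1. It remains to see that
  Re (c f'/g') > 0 forces Re (c f/g) > 0: for H = c f/g one has c f'/g' = H + (g/(z g')) z H',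
  and at a point of least modulus where Re H vanishes, z H' is real and nonpositive while
  Re (g/(z g')) > 0.
*)

lemma has_real_derivative_Re_comp:
  fixes u :: "complex \<Rightarrow> complex" and \<gamma> :: "real \<Rightarrow> complex"
  assumes "(\<gamma> has_vector_derivative \<gamma>') (at t)" and "(u has_field_derivative u') (at (\<gamma> t))"
  shows "((\<lambda>s. Re (u (\<gamma> s))) has_real_derivative Re (\<gamma>' * u')) (at t)"
proof -
  have "((u \<circ> \<gamma>) has_vector_derivative (\<gamma>' * u')) (at t)"
    by (rule field_vector_diff_chain_at[OF assms])
  then have "((\<lambda>s. Re ((u \<circ> \<gamma>) s)) has_derivative (\<lambda>x. Re (x *\<^sub>R (\<gamma>' * u')))) (at t)"
    unfolding has_vector_derivative_def by (rule bounded_linear.has_derivative[OF bounded_linear_Re])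
  then show ?thesis
    by (simp add: has_real_derivative_iff_has_vector_derivative has_vector_derivative_def o_def
        mult.commute)
qed

lemma Re_tangential_derivative_eq_0_at_max:
  fixes u :: "complex \<Rightarrow> complex"
  assumes "(u has_field_derivative u') (at z0)" and "d > 0"
    and "\<And>\<theta>::real. \<bar>\<theta>\<bar> < d \<Longrightarrow> Re (u (z0 * exp (\<i> * of_real \<theta>))) \<le> Re (u z0)"
  shows "Re (\<i> * z0 * u') = 0"
proof -
  have "((\<lambda>\<theta>::real. z0 * exp (\<i> * of_real \<theta>)) has_vector_derivative (z0 * \<i>)) (at 0)"
    by (rule has_vector_derivative_real_field derivative_eq_intros refl | simp)+
  then have "((\<lambda>\<theta>. Re (u (z0 * exp (\<i> * of_real \<theta>)))) has_real_derivative Re (z0 * \<i> * u')) (at 0)"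
    by (rule has_real_derivative_Re_comp) (simp add: assms(1))
  then have "Re (z0 * \<i> * u') = 0"
    by (rule DERIV_local_max[OF _ assms(2)]) (use assms(3) in auto)
  then show ?thesis by (simp add: algebra_simps)
qed

lemma Re_radial_derivative_nonneg_at_max:
  fixes u :: "complex \<Rightarrow> complex"
  assumes "(u has_field_derivative u') (at z0)"
    and "\<And>t::real. 0 \<le> t \<Longrightarrow> t < 1 \<Longrightarrow> Re (u (of_real t * z0)) \<le> Re (u z0)"
  shows "Re (z0 * u') \<ge> 0"
proof (rule ccontr)
  assume "\<not> Re (z0 * u') \<ge> 0"
  then have neg: "Re (z0 * u') < 0" by simp
  have "((\<lambda>t::real. of_real t * z0) has_vector_derivative z0) (at 1)"
    by (rule has_vector_derivative_real_field derivative_eq_intros refl | simp)+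
  then have "((\<lambda>t. Re (u (of_real t * z0))) has_real_derivative Re (z0 * u')) (at 1)"
    by (rule has_real_derivative_Re_comp) (simp add: assms(1))
  from DERIV_neg_dec_left[OF this neg] obtain d where "d > 0"
    and dec: "\<And>h. h > 0 \<Longrightarrow> h < d \<Longrightarrow> Re (u z0) < Re (u (of_real (1 - h) * z0))"
    by auto
  define h where "h = min (d/2) (1/2)"
  have "h > 0" "h < d" "h \<le> 1/2" using \<open>d > 0\<close> by (auto simp: h_def)
  with dec[of h] assms(2)[of "1 - h"] show False by auto
qed

lemma z_deriv_real_nonpos_at_Re_min:
  fixes H :: "complex \<Rightarrow> complex"
  assumes dH: "(H has_field_derivative H') (at z0)" and "Re (H z0) = 0"
    and ge: "\<And>x. norm x \<le> norm z0 \<Longrightarrow> 0 \<le> Re (H x)"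
  shows "Im (z0 * H') = 0" and "Re (z0 * H') \<le> 0"
proof -
  have d_neg: "((\<lambda>x. - H x) has_field_derivative - H') (at z0)"
    using dH by (rule DERIV_minus)
  have "Re (\<i> * z0 * (- H')) = 0"
  proof (rule Re_tangential_derivative_eq_0_at_max[OF d_neg, of 1])
    fix \<theta> :: real
    show "Re (- H (z0 * exp (\<i> * of_real \<theta>))) \<le> Re (- H z0)"
      using ge[of "z0 * exp (\<i> * of_real \<theta>)"] \<open>Re (H z0) = 0\<close> by (simp add: norm_mult)
  qed simp
  then show "Im (z0 * H') = 0" by (simp add: algebra_simps)
  have "Re (z0 * (- H')) \<ge> 0"
  proof (rule Re_radial_derivative_nonneg_at_max[OF d_neg])
    fix t :: real assume "0 \<le> t" "t < 1"
    then have "norm (of_real t * z0) \<le> norm z0" by (simp add: norm_mult mult_left_le_one_le)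
    then show "Re (- H (of_real t * z0)) \<le> Re (- H z0)"
      using ge[of "of_real t * z0"] \<open>Re (H z0) = 0\<close> by simp
  qed
  then show "Re (z0 * H') \<le> 0" by simp
qed

lemma continuous_on_ball_first_zero:
  fixes F :: "complex \<Rightarrow> real"
  assumes contF: "continuous_on (ball 0 1) F" and "F 0 > 0"
    and z1: "z1 \<in> ball 0 1" and "F z1 \<le> 0"
  obtains z0 where "z0 \<in> ball 0 1" "z0 \<noteq> 0" "F z0 = 0" "\<And>z. norm z \<le> norm z0 \<Longrightarrow> F z \<ge> 0"
proof -
  have closed_sublevel: "closed (cball 0 r \<inter> F -` A)" if "r < 1" "closed A" for r A
    by (rule continuous_closed_preimage)
      (use that in \<open>auto intro: continuous_on_subset[OF contF]\<close>)
  define S where "S = cball 0 (norm z1) \<inter> F -` {..0}"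
  have "compact S"
    using closed_sublevel[of "norm z1" "{..0}"] z1 unfolding S_def
    by (meson bounded_Int bounded_cball compact_eq_bounded_closed closed_atMost mem_ball_0)
  moreover have "S \<noteq> {}" using \<open>F z1 \<le> 0\<close> by (auto simp: S_def)
  ultimately obtain z0 where z0S: "z0 \<in> S" and minz: "\<And>y. y \<in> S \<Longrightarrow> norm z0 \<le> norm y"
    using continuous_attains_inf[of S norm] by (auto intro: continuous_intros)
  have "z0 \<noteq> 0" "z0 \<in> ball 0 1" using z0S \<open>F 0 > 0\<close> z1 by (auto simp: S_def)
  have "F z \<ge> 0" if "norm z < norm z0" for z
    using minz[of z] that z0S by (fastforce simp: S_def)
  then have "ball 0 (norm z0) \<subseteq> cball 0 (norm z0) \<inter> F -` {0..}"
    by auto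
  then have "closure (ball 0 (norm z0)) \<subseteq> cball 0 (norm z0) \<inter> F -` {0..}"
    by (rule closure_minimal) (use closed_sublevel \<open>z0 \<in> ball 0 1\<close> in auto)
  then have ge: "F z \<ge> 0" if "norm z \<le> norm z0" for z
    using that \<open>z0 \<noteq> 0\<close> by auto
  have "F z0 = 0" using ge[of z0] z0S by (auto simp: S_def)
  then show ?thesis using that \<open>z0 \<in> ball 0 1\<close> \<open>z0 \<noteq> 0\<close> ge by blast
qed

lemma Schwarz_radial_bound:
  fixes w :: "complex \<Rightarrow> complex"
  assumes holw: "w holomorphic_on ball 0 1" and "w 0 = 0"
    and z0: "z0 \<in> ball 0 1" "z0 \<noteq> 0"
    and le: "\<And>z. norm z \<le> norm z0 \<Longrightarrow> norm (w z) \<le> 1"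
    and t: "0 \<le> t" "t < 1"
  shows "norm (w (of_real t * z0)) \<le> t"
proof (rule field_le_epsilon)
  fix e :: real assume "e > 0"
  define r where "r = norm z0"
  have r: "r > 0" "r < 1" using z0 by (auto simp: r_def)
  have norm_1e: "norm (1 + complex_of_real e) = 1 + e"
    using norm_of_real[of "1 + e"] \<open>e > 0\<close> by simp
  \<comment> \<open>dividing by 1 + e makes the rescaled map strictly bounded by 1, as Schwarz's lemma needs\<close>
  define \<omega> where "\<omega> = (\<lambda>\<zeta>. w (of_real r * \<zeta>) / of_real (1 + e))"
  have "norm (of_real r * \<zeta>) < 1" if "norm \<zeta> < 1" for \<zeta> :: complex
  proof -
    have "r * norm \<zeta> < 1 * 1" using r that by (intro mult_strict_mono) auto
    then show ?thesis using r by (simp add: norm_mult)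
  qed
  then have "(\<lambda>\<zeta>. complex_of_real r * \<zeta>) ` ball 0 1 \<subseteq> ball 0 1" by auto
  then have "\<omega> holomorphic_on ball 0 1"
    unfolding \<omega>_def using \<open>e > 0\<close>
    by (intro holomorphic_intros holomorphic_on_compose_gen[OF _ holw, unfolded o_def])
      (auto simp: complex_eq_iff)
  moreover have "\<omega> 0 = 0" using \<open>w 0 = 0\<close> by (simp add: \<omega>_def)
  moreover have "norm (\<omega> z) < 1" if "norm z < 1" for z
  proof -
    have "norm (of_real r * z) \<le> norm z0" using r that by (simp add: norm_mult r_def mult_left_le)
    then have "norm (w (of_real r * z)) \<le> 1" by (rule le)
    then show ?thesis using \<open>e > 0\<close> by (simp add: \<omega>_def norm_divide norm_1e divide_less_eq)
  qed
  ultimately have Schwarz: "norm (\<omega> \<zeta>) \<le> norm \<zeta>" if "norm \<zeta> < 1" for \<zeta>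
    using Schwarz_Lemma(1)[of \<omega>] that by blast
  have "norm (of_real (t / r) * z0) = t"
    using r t unfolding norm_mult norm_of_real r_def by simp
  then have "norm (\<omega> (of_real (t / r) * z0)) \<le> t"
    using Schwarz[of "of_real (t / r) * z0"] t by simp
  moreover have "of_real r * (of_real (t / r) * z0) = of_real t * z0" using r by simp
  ultimately have "norm (w (of_real t * z0)) \<le> t * (1 + e)"
    using \<open>e > 0\<close> by (simp add: \<omega>_def norm_divide norm_1e divide_le_eq)
  also have "\<dots> \<le> t + e" using t \<open>e > 0\<close> by (simp add: algebra_simps)
  finally show "norm (w (of_real t * z0)) \<le> t + e" .
qed

lemma Jack_lemma:
  fixes w :: "complex \<Rightarrow> complex"
  assumes holw: "w holomorphic_on ball 0 1" and w0: "w 0 = 0"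
    and z0: "z0 \<in> ball 0 1" "z0 \<noteq> 0"
    and le: "\<And>z. norm z \<le> norm z0 \<Longrightarrow> norm (w z) \<le> 1" and eq: "norm (w z0) = 1"
  obtains k :: real where "k \<ge> 1" and "z0 * deriv w z0 = of_real k * w z0"
proof -
  have dw: "(w has_field_derivative deriv w z0) (at z0)"
    using holw z0 by (auto intro: holomorphic_derivI)
  have ww: "w z0 * cnj (w z0) = 1"
    using eq by (simp add: complex_norm_square[symmetric])
  have Re_le: "Re (a * cnj (w z0)) \<le> norm a" for a
    using complex_Re_le_cmod[of "a * cnj (w z0)"] eq by (simp add: norm_mult)
  define X where "X = z0 * deriv w z0 * cnj (w z0)"
  have "Re (\<i> * z0 * (deriv w z0 * cnj (w z0))) = 0"
  proof (rule Re_tangential_derivative_eq_0_at_max[of "\<lambda>z. w z * cnj (w z0)" _ _ 1])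
    show "((\<lambda>z. w z * cnj (w z0)) has_field_derivative deriv w z0 * cnj (w z0)) (at z0)"
      by (auto intro!: derivative_eq_intros dw)
    fix \<theta> :: real
    have "norm (w (z0 * exp (\<i> * of_real \<theta>))) \<le> 1"
      using le by (simp add: norm_mult)
    then show "Re (w (z0 * exp (\<i> * of_real \<theta>)) * cnj (w z0)) \<le> Re (w z0 * cnj (w z0))"
      using Re_le[of "w (z0 * exp (\<i> * of_real \<theta>))"] ww by simp
  qed simp
  then have "Im X = 0" by (simp add: X_def algebra_simps)
  have "Re (z0 * (deriv w z0 * cnj (w z0) - 1 / z0)) \<ge> 0"
  proof (rule Re_radial_derivative_nonneg_at_max[of "\<lambda>z. w z * cnj (w z0) - z / z0"])
    show "((\<lambda>z. w z * cnj (w z0) - z / z0) has_field_derivative deriv w z0 * cnj (w z0) - 1 / z0)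
        (at z0)"
      by (auto intro!: derivative_eq_intros dw simp: z0)
    fix t :: real assume t: "0 \<le> t" "t < 1"
    have "Re (w (of_real t * z0) * cnj (w z0)) \<le> t"
      using Schwarz_radial_bound[OF holw w0 z0 le t] Re_le[of "w (of_real t * z0)"] by linarith
    then show "Re (w (of_real t * z0) * cnj (w z0) - of_real t * z0 / z0)
        \<le> Re (w z0 * cnj (w z0) - z0 / z0)"
      using ww z0 by simp
  qed
  then have "Re X \<ge> 1" using z0 by (simp add: X_def algebra_simps)
  moreover have "z0 * deriv w z0 = of_real (Re X) * w z0"
  proof -
    have "of_real (Re X) * w z0 = X * w z0"
      using \<open>Im X = 0\<close> by (simp add: complex_eq_iff)
    also have "\<dots> = z0 * deriv w z0 * (w z0 * cnj (w z0))" by (simp add: X_def mult_ac)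
    finally show ?thesis using ww by simp
  qed
  ultimately show ?thesis by (rule that)
qed

definition over_z :: "(complex \<Rightarrow> complex) \<Rightarrow> complex \<Rightarrow> complex" where
  "over_z f z = (if z = 0 then deriv f 0 else f z / z)"

lemma over_z_0 [simp]: "over_z f 0 = deriv f 0"
  by (simp add: over_z_def)

lemma mult_over_z: "f 0 = 0 \<Longrightarrow> z * over_z f z = f z"
  by (simp add: over_z_def)

lemma holomorphic_over_z:
  assumes "f holomorphic_on S" "open S" "f 0 = 0"
  shows "over_z f holomorphic_on S"
proof -
  have "over_z f = (\<lambda>z. if z = 0 then deriv f 0 else (f z - f 0) / (z - 0))"
    using assms(3) by (auto simp: over_z_def)
  then show ?thesis using pole_lemma_open[OF assms(1,2)] by simp
qed

lemma deriv_over_z: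
  assumes "f holomorphic_on S" "open S" "f 0 = 0" "z \<in> S"
  shows "z * deriv (over_z f) z = deriv f z - over_z f z"
proof -
  have "over_z f field_differentiable at z"
    using holomorphic_over_z[OF assms(1-3)] assms(2,4) by (rule holomorphic_on_imp_differentiable_at)
  then have "deriv (\<lambda>x. x * over_z f x) z = z * deriv (over_z f) z + over_z f z"
    by (simp add: field_differentiable_ident)
  then show ?thesis
    by (simp add: mult_over_z[of f, OF assms(3)])
qed

lemma over_z_div_deriv_identity:
  assumes "g holomorphic_on ball 0 1" "g 0 = 0" "\<And>x. x \<in> ball 0 1 \<Longrightarrow> deriv g x \<noteq> 0"
    and z: "z \<in> ball 0 1"
  defines "q \<equiv> \<lambda>x. over_z g x / deriv g x"
  shows "1 = q z * (1 + z * deriv (deriv g) z / deriv g z) + z * deriv q z"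
proof -
  have "over_z g field_differentiable at z" "deriv g field_differentiable at z"
    using holomorphic_over_z[OF assms(1) _ assms(2)] holomorphic_deriv[OF assms(1)] z
    by (auto intro: holomorphic_on_imp_differentiable_at)
  then have "deriv q z
      = (deriv (over_z g) z * deriv g z - over_z g z * deriv (deriv g) z) / (deriv g z)\<^sup>2"
    unfolding q_def using assms(3)[OF z] by simp
  then have "z * deriv q z
      = (z * deriv (over_z g) z * deriv g z - over_z g z * (z * deriv (deriv g) z)) / (deriv g z)\<^sup>2"
    by (simp add: algebra_simps)
  also have "\<dots> = ((deriv g z - over_z g z) * deriv g z - over_z g z * (z * deriv (deriv g) z))
      / (deriv g z)\<^sup>2"
    by (simp only: deriv_over_z[OF assms(1) _ assms(2) z] open_ball)
  finally have dq: "z * deriv q z = \<dots>" .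
  show ?thesis
    unfolding dq using assms(3)[OF z] by (simp add: q_def field_simps power2_eq_square)
qed

(* The relation that Jack's lemma forces at the first point where |q - 1| = 1, for
   q = over_z g / g', w = q - 1 and A = 1 + z g''/g'. *)
lemma one_add_unimodular_mult_ne:
  fixes w A :: complex
  assumes "norm w = 1" and "1 \<le> k" and "0 < Re A"
  shows "(1 + w) * A \<noteq> 1 - of_real k * w"
proof
  assume E: "(1 + w) * A = 1 - of_real k * w"
  have ww: "w * cnj w = 1" using assms(1) by (simp add: complex_norm_square[symmetric])
  define n where "n = (norm (1 + w))\<^sup>2"
  have norm_eq: "(1 + w) * A * cnj (1 + w) = of_real n * A"
    unfolding n_def complex_norm_square by (simp add: mult_ac)
  have "n * Re A = Re ((1 + w) * A * cnj (1 + w))"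
    unfolding norm_eq by simp
  also have "\<dots> = Re (1 + cnj w - of_real k * w - of_real k * (w * cnj w))"
    unfolding E by (simp add: algebra_simps)
  also have "\<dots> = (1 - k) * (1 + Re w)" unfolding ww by (simp add: algebra_simps)
  also have "\<dots> \<le> 0"
    using assms(1,2) abs_Re_le_cmod[of w] by (intro mult_nonpos_nonneg) auto
  finally have "w = -1"
    using assms(3) by (simp add: n_def mult_le_0_iff add_eq_0_iff)
  with E have "1 + of_real k = (0::complex)" by simp
  then show False using assms(2) by (simp add: complex_eq_iff)
qed

lemma Re_inverse_gt_half:
  fixes q :: complex
  assumes "norm (q - 1) < 1"
  shows "1/2 < Re (inverse q)"
proof -
  have "(Re q - 1)\<^sup>2 + (Im q)\<^sup>2 < 1"
    using assms by (simp add: cmod_def)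
  moreover have "q \<noteq> 0" using assms by auto
  then have "0 < (Re q)\<^sup>2 + (Im q)\<^sup>2" by (simp add: complex_neq_0)
  ultimately show ?thesis
    by (simp add: inverse_eq_divide Re_divide field_simps power2_eq_square)
qed

lemma Marx_Strohhacker:
  assumes g: "g \<in> classK" and z: "z \<in> ball 0 1"
  shows "norm (over_z g z / deriv g z - 1) < 1"
proof (rule ccontr)
  assume contra: "\<not> ?thesis"
  have holg: "g holomorphic_on ball 0 1" and "g 0 = 0" "deriv g 0 = 1"
    and g'nz: "\<And>x. x \<in> ball 0 1 \<Longrightarrow> deriv g x \<noteq> 0"
    and convex: "\<And>x. x \<in> ball 0 1 \<Longrightarrow> 0 < Re (1 + x * deriv (deriv g) x / deriv g x)"
    using g by (auto simp: classK_def classA_def)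
  define q where "q = (\<lambda>x. over_z g x / deriv g x)"
  define w where "w = (\<lambda>x. q x - 1)"
  have holq: "q holomorphic_on ball 0 1"
    unfolding q_def using holg \<open>g 0 = 0\<close> g'nz
    by (intro holomorphic_intros holomorphic_over_z holomorphic_deriv) auto
  then have holw: "w holomorphic_on ball 0 1" unfolding w_def by (intro holomorphic_intros)
  have "w 0 = 0" using \<open>deriv g 0 = 1\<close> by (simp add: w_def q_def)
  obtain z0 where z0: "z0 \<in> ball 0 1" "z0 \<noteq> 0" "1 - norm (w z0) = 0"
    and le: "\<And>x. norm x \<le> norm z0 \<Longrightarrow> 1 - norm (w x) \<ge> 0"
  proof (rule continuous_on_ball_first_zero[of "\<lambda>x. 1 - norm (w x)" z])
    show "continuous_on (ball 0 1) (\<lambda>x. 1 - norm (w x))"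
      using holomorphic_on_imp_continuous_on[OF holw] by (intro continuous_intros)
  qed (use \<open>w 0 = 0\<close> contra z in \<open>auto simp: w_def q_def\<close>)
  obtain k where "1 \<le> k" and Jack: "z0 * deriv w z0 = of_real k * w z0"
    by (rule Jack_lemma[OF holw \<open>w 0 = 0\<close> z0(1,2)]) (use le z0(3) in auto)
  have "deriv w z0 = deriv q z0"
    unfolding w_def using holq z0(1) by (simp add: holomorphic_on_imp_differentiable_at)
  then have "z0 * deriv q z0 = of_real k * w z0" using Jack by simp
  moreover have "1 = q z0 * (1 + z0 * deriv (deriv g) z0 / deriv g z0) + z0 * deriv q z0"
    unfolding q_def by (rule over_z_div_deriv_identity[OF holg \<open>g 0 = 0\<close> g'nz z0(1)])
  ultimately have "(1 + w z0) * (1 + z0 * deriv (deriv g) z0 / deriv g z0) = 1 - of_real k * w z0"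
    by (simp add: w_def eq_diff_eq)
  moreover have "norm (w z0) = 1" using z0(3) by simp
  ultimately show False
    using one_add_unimodular_mult_ne \<open>1 \<le> k\<close> convex[OF z0(1)] by blast
qed

lemma Marx_Strohhacker_Re:
  assumes "g \<in> classK" and "z \<in> ball 0 1"
  shows "0 < Re (over_z g z / deriv g z)" and "1/2 < Re (deriv g z / over_z g z)"
proof -
  have "norm (over_z g z / deriv g z - 1) < 1" by (rule Marx_Strohhacker[OF assms])
  then show "0 < Re (over_z g z / deriv g z)"
    using abs_Re_le_cmod[of "over_z g z / deriv g z - 1"] by simp
  show "1/2 < Re (deriv g z / over_z g z)"
    using Re_inverse_gt_half[OF \<open>norm (over_z g z / deriv g z - 1) < 1\<close>] by simp
qed

lemma deriv_over_z_quotient_identity: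
  fixes c :: complex
  assumes holf: "f holomorphic_on ball 0 1" "f 0 = 0"
    and holg: "g holomorphic_on ball 0 1" "g 0 = 0"
    and z: "z \<in> ball 0 1" and "over_z g z \<noteq> 0" and "deriv g z \<noteq> 0"
  defines "H \<equiv> \<lambda>x. c * (over_z f x / over_z g x)"
  shows "c * deriv f z / deriv g z = H z + over_z g z / deriv g z * (z * deriv H z)"
proof -
  have df: "over_z f field_differentiable at z" and dg: "over_z g field_differentiable at z"
    using holomorphic_over_z[OF holf(1) _ holf(2)] holomorphic_over_z[OF holg(1) _ holg(2)] z
    by (auto intro: holomorphic_on_imp_differentiable_at)
  have "deriv H z = c * deriv (\<lambda>x. over_z f x / over_z g x) z"
    unfolding H_def using df dg \<open>over_z g z \<noteq> 0\<close> by (intro deriv_cmult field_differentiable_divide)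
  also have "\<dots> = c * ((deriv (over_z f) z * over_z g z - over_z f z * deriv (over_z g) z)
      / (over_z g z)\<^sup>2)"
    using df dg \<open>over_z g z \<noteq> 0\<close> by simp
  finally have "z * deriv H z = c * ((z * deriv (over_z f) z) * over_z g z
      - over_z f z * (z * deriv (over_z g) z)) / (over_z g z)\<^sup>2"
    by (simp add: algebra_simps)
  also have "\<dots> = c * ((deriv f z - over_z f z) * over_z g z
      - over_z f z * (deriv g z - over_z g z)) / (over_z g z)\<^sup>2"
    by (simp only: deriv_over_z[OF holf(1) _ holf(2) z] deriv_over_z[OF holg(1) _ holg(2) z]
        open_ball)
  finally have zH: "z * deriv H z = \<dots>" .
  show ?thesis
    unfolding zH using \<open>over_z g z \<noteq> 0\<close> \<open>deriv g z \<noteq> 0\<close>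
    by (simp add: H_def field_simps power2_eq_square)
qed

lemma Re_over_z_quotient_pos:
  assumes f: "f \<in> classA" and g: "g \<in> classK"
    and pos: "\<And>z. z \<in> ball 0 1 \<Longrightarrow> 0 < Re (c * deriv f z / deriv g z)"
    and z: "z \<in> ball 0 1"
  shows "0 < Re (c * (over_z f z / over_z g z))"
proof (rule ccontr)
  assume contra: "\<not> ?thesis"
  have holf: "f holomorphic_on ball 0 1" "f 0 = 0" "deriv f 0 = 1"
    using f by (auto simp: classA_def)
  have holg: "g holomorphic_on ball 0 1" "g 0 = 0" "deriv g 0 = 1"
    and g'nz: "\<And>x. x \<in> ball 0 1 \<Longrightarrow> deriv g x \<noteq> 0"
    using g by (auto simp: classK_def classA_def)
  have q_pos: "0 < Re (over_z g x / deriv g x)" if "x \<in> ball 0 1" for x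
    by (rule Marx_Strohhacker_Re(1)[OF g that])
  then have over_z_nz: "over_z g x \<noteq> 0" if "x \<in> ball 0 1" for x
    using that by force
  define H where "H = (\<lambda>x. c * (over_z f x / over_z g x))"
  have holH: "H holomorphic_on ball 0 1"
    unfolding H_def using holf holg over_z_nz
    by (intro holomorphic_intros holomorphic_over_z) auto
  have "0 < Re (H 0)" using pos[of 0] holf holg by (simp add: H_def)
  obtain z0 where z0: "z0 \<in> ball 0 1" "z0 \<noteq> 0" "Re (H z0) = 0"
    and ge: "\<And>x. norm x \<le> norm z0 \<Longrightarrow> Re (H x) \<ge> 0"
  proof (rule continuous_on_ball_first_zero[of "\<lambda>x. Re (H x)" z])
    show "continuous_on (ball 0 1) (\<lambda>x. Re (H x))"
      using holomorphic_on_imp_continuous_on[OF holH] by (intro continuous_intros)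
  qed (use \<open>0 < Re (H 0)\<close> contra z in \<open>auto simp: H_def\<close>)
  have "(H has_field_derivative deriv H z0) (at z0)"
    using holH z0(1) by (auto intro: holomorphic_derivI)
  from z_deriv_real_nonpos_at_Re_min[OF this z0(3) ge]
  have "Re (q * (z0 * deriv H z0)) \<le> 0" if "0 < Re q" for q
    using that mult_nonneg_nonpos[of "Re q" "Re (z0 * deriv H z0)"] by simp
  then have "Re (over_z g z0 / deriv g z0 * (z0 * deriv H z0)) \<le> 0"
    using q_pos[OF z0(1)] by blast
  moreover have "c * deriv f z0 / deriv g z0 = H z0 + over_z g z0 / deriv g z0 * (z0 * deriv H z0)"
    unfolding H_def
    by (rule deriv_over_z_quotient_identity[OF holf(1,2) holg(1,2) z0(1) over_z_nz g'nz])
      (use z0 in auto)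
  ultimately have "Re (c * deriv f z0 / deriv g z0) \<le> 0"
    using z0(3) by simp
  with pos[OF z0(1)] show False by simp
qed

definition Cbeta_integrand :: "real \<Rightarrow> (complex \<Rightarrow> complex) \<Rightarrow> complex \<Rightarrow> complex" where
  "Cbeta_integrand \<beta> f w = over_z f w / (1 - w) powr of_real \<beta>"

lemma one_minus_notin_nonpos_Reals: "(w::complex) \<in> ball 0 1 \<Longrightarrow> 1 - w \<notin> \<real>\<^sub>\<le>\<^sub>0"
  using complex_Re_le_cmod[of w] by (auto simp: complex_nonpos_Reals_iff)

lemma holomorphic_Cbeta_integrand:
  assumes "f holomorphic_on ball 0 1" "f 0 = 0"
  shows "Cbeta_integrand \<beta> f holomorphic_on ball 0 1"
  unfolding Cbeta_integrand_def[abs_def] using assms one_minus_notin_nonpos_Reals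
  by (intro holomorphic_intros holomorphic_over_z) (auto simp: dist_norm)

lemma Cbeta_eq_contour_integral: "Cbeta \<beta> f z = contour_integral (linepath 0 z) (Cbeta_integrand \<beta> f)"
proof (cases "z = 0")
  case False
  show ?thesis unfolding Cbeta_def
  proof (rule contour_integral_spike_finite_simple_path[of "{0}"])
    fix x assume "x \<in> path_image (linepath 0 z) - {0}"
    then show "f x / (x * (1 - x) powr of_real \<beta>) = Cbeta_integrand \<beta> f x"
      by (simp add: Cbeta_integrand_def over_z_def)
  qed (use False in auto)
qed (simp add: Cbeta_def)

lemma has_field_derivative_Cbeta:
  assumes "f holomorphic_on ball 0 1" "f 0 = 0" and z: "z \<in> ball 0 1"
  shows "(Cbeta \<beta> f has_field_derivative Cbeta_integrand \<beta> f z) (at z)"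
proof -
  have hol: "Cbeta_integrand \<beta> f holomorphic_on ball 0 1"
    by (rule holomorphic_Cbeta_integrand[OF assms(1,2)])
  have "((\<lambda>x. contour_integral (linepath 0 x) (Cbeta_integrand \<beta> f)) has_field_derivative
      Cbeta_integrand \<beta> f z) (at z within ball 0 1)"
  proof (rule triangle_contour_integrals_convex_primitive[OF _ _ convex_ball z])
    show "continuous_on (ball 0 1) (Cbeta_integrand \<beta> f)"
      using hol by (rule holomorphic_on_imp_continuous_on)
    fix b c assume "b \<in> ball (0::complex) 1" "c \<in> ball (0::complex) 1"
    then have "convex hull {0, b, c} \<subseteq> ball 0 1"
      by (intro hull_minimal) auto
    then show "contour_integral (linepath 0 b) (Cbeta_integrand \<beta> f)
        + contour_integral (linepath b c) (Cbeta_integrand \<beta> f)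
        + contour_integral (linepath c 0) (Cbeta_integrand \<beta> f) = 0"
      by (intro has_chain_integral_chain_integral3 Cauchy_theorem_triangle
          holomorphic_on_subset[OF hol])
  qed simp
  then show ?thesis
    unfolding Cbeta_eq_contour_integral[abs_def] at_within_open[OF z open_ball] .
qed

lemma holomorphic_Cbeta:
  assumes "f holomorphic_on ball 0 1" "f 0 = 0"
  shows "Cbeta \<beta> f holomorphic_on ball 0 1"
  unfolding holomorphic_on_open[OF open_ball] using has_field_derivative_Cbeta[OF assms] by blast

lemma deriv_Cbeta:
  assumes "f holomorphic_on ball 0 1" "f 0 = 0" and z: "z \<in> ball 0 1"
  shows "deriv (Cbeta \<beta> f) z = Cbeta_integrand \<beta> f z"
    and "deriv (deriv (Cbeta \<beta> f)) z = deriv (Cbeta_integrand \<beta> f) z"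
proof -
  have eq: "deriv (Cbeta \<beta> f) x = Cbeta_integrand \<beta> f x" if "x \<in> ball 0 1" for x
    using has_field_derivative_Cbeta[OF assms(1,2) that] by (rule DERIV_imp_deriv)
  then show "deriv (Cbeta \<beta> f) z = Cbeta_integrand \<beta> f z" using z .
  have "eventually (\<lambda>x. deriv (Cbeta \<beta> f) x = Cbeta_integrand \<beta> f x) (nhds z)"
    using eventually_nhds_in_open[OF open_ball z] by (rule eventually_mono) (rule eq)
  then show "deriv (deriv (Cbeta \<beta> f)) z = deriv (Cbeta_integrand \<beta> f) z"
    by (rule deriv_cong_ev) simp
qed

lemma Cbeta_in_classA: "f \<in> classA \<Longrightarrow> Cbeta \<beta> f \<in> classA"
  using holomorphic_Cbeta deriv_Cbeta(1)[of f 0 \<beta>]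
  by (simp add: classA_def Cbeta_def Cbeta_integrand_def)

lemma Cbeta_convexity_expression:
  assumes holg: "g holomorphic_on ball 0 1" "g 0 = 0" and z: "z \<in> ball 0 1"
    and "over_z g z \<noteq> 0"
  shows "1 + z * deriv (deriv (Cbeta \<beta> g)) z / deriv (Cbeta \<beta> g) z
    = deriv g z / over_z g z + of_real \<beta> * (z / (1 - z))"
proof -
  define s where "s = complex_of_real \<beta>"
  define P where "P = (1 - z) powr s"
  have "1 - z \<notin> \<real>\<^sub>\<le>\<^sub>0" by (rule one_minus_notin_nonpos_Reals[OF z])
  then have "1 - z \<noteq> 0" "P \<noteq> 0" by (auto simp: P_def)
  have dP: "((\<lambda>w. (1 - w) powr s) has_field_derivative - (s * (1 - z) powr (s - 1))) (at z)"
    using \<open>1 - z \<notin> \<real>\<^sub>\<le>\<^sub>0\<close> by (auto intro!: derivative_eq_intros)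
  have "(over_z g has_field_derivative deriv (over_z g) z) (at z)"
    using holomorphic_over_z[OF holg(1) _ holg(2)] z by (auto intro: holomorphic_derivI)
  from DERIV_divide[OF this dP] \<open>P \<noteq> 0\<close>
  have "(Cbeta_integrand \<beta> g has_field_derivative
      (deriv (over_z g) z * P + over_z g z * (s * (1 - z) powr (s - 1))) / (P * P)) (at z)"
    unfolding Cbeta_integrand_def[abs_def] s_def[symmetric] by (simp add: P_def)
  moreover have "(1 - z) powr (s - 1) = P / (1 - z)"
    using \<open>1 - z \<noteq> 0\<close> by (simp add: P_def powr_diff)
  ultimately have "(Cbeta_integrand \<beta> g has_field_derivative
      (deriv (over_z g) z * P + over_z g z * (s * (P / (1 - z)))) / (P * P)) (at z)"
    by simp
  then have "z * deriv (Cbeta_integrand \<beta> g) z / Cbeta_integrand \<beta> g z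
      = z * deriv (over_z g) z / over_z g z + s * (z / (1 - z))"
    using \<open>P \<noteq> 0\<close> \<open>1 - z \<noteq> 0\<close> \<open>over_z g z \<noteq> 0\<close>
    by (simp add: DERIV_imp_deriv Cbeta_integrand_def P_def s_def field_simps)
  then show ?thesis
    using deriv_Cbeta[OF holg z] deriv_over_z[OF holg(1) _ holg(2) z] \<open>over_z g z \<noteq> 0\<close>
    by (simp add: s_def field_simps)
qed

lemma Re_div_one_minus_gt:
  assumes "z \<in> ball 0 1"
  shows "- 1/2 < Re (z / (1 - z))"
proof -
  have "(Re z)\<^sup>2 + (Im z)\<^sup>2 < 1"
    using assms by (simp add: cmod_def)
  moreover have "Re z < 1" using assms complex_Re_le_cmod[of z] by simp
  then have "0 < (1 - Re z)\<^sup>2 + (Im z)\<^sup>2" by (simp add: add_pos_nonneg)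
  ultimately show ?thesis
    by (simp add: Re_divide field_simps power2_eq_square)
qed

lemma Cbeta_in_classK:
  assumes g: "g \<in> classK" and "0 \<le> \<beta>" "\<beta> \<le> 1"
  shows "Cbeta \<beta> g \<in> classK"
proof -
  have holg: "g holomorphic_on ball 0 1" "g 0 = 0" and "g \<in> classA"
    using g by (auto simp: classK_def classA_def)
  have "deriv (Cbeta \<beta> g) z \<noteq> 0 \<and> 0 < Re (1 + z * deriv (deriv (Cbeta \<beta> g)) z / deriv (Cbeta \<beta> g) z)"
    if z: "z \<in> ball 0 1" for z
  proof
    have "over_z g z \<noteq> 0"
      using Marx_Strohhacker_Re(1)[OF g z] by force
    then show "deriv (Cbeta \<beta> g) z \<noteq> 0"
      using deriv_Cbeta(1)[OF holg z] one_minus_notin_nonpos_Reals[OF z]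
      by (auto simp: Cbeta_integrand_def)
    have Re_scale: "Re (of_real \<beta> * w) = \<beta> * Re w" for w by simp
    have "\<beta> * (- 1/2) \<le> \<beta> * Re (z / (1 - z))"
      using Re_div_one_minus_gt[OF z] \<open>0 \<le> \<beta>\<close> by (intro mult_left_mono) auto
    then show "0 < Re (1 + z * deriv (deriv (Cbeta \<beta> g)) z / deriv (Cbeta \<beta> g) z)"
      unfolding Cbeta_convexity_expression[OF holg z \<open>over_z g z \<noteq> 0\<close>]
      using Marx_Strohhacker_Re(2)[OF g z] \<open>\<beta> \<le> 1\<close> Re_scale[of "z / (1 - z)"] by simp
  qed
  then show ?thesis using Cbeta_in_classA[OF \<open>g \<in> classA\<close>] by (simp add: classK_def)
qed

theorem theorem2p16:
  fixes \<beta> :: real and f :: "complex \<Rightarrow> complex"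
  assumes "0 \<le> \<beta>" and "\<beta> \<le> 1" and "f \<in> classC"
  shows "Cbeta \<beta> f \<in> classC"
proof -
  obtain g \<alpha> where f: "f \<in> classA" and g: "g \<in> classK" and \<alpha>: "-(pi/2) < \<alpha>" "\<alpha> < pi/2"
    and pos: "\<And>z. z \<in> ball 0 1 \<Longrightarrow> 0 < Re (exp (\<i> * of_real \<alpha>) * deriv f z / deriv g z)"
    using assms(3) unfolding classC_def by blast
  have holf: "f holomorphic_on ball 0 1" "f 0 = 0" and holg: "g holomorphic_on ball 0 1" "g 0 = 0"
    using f g by (auto simp: classK_def classA_def)
  have ratio: "deriv (Cbeta \<beta> f) z / deriv (Cbeta \<beta> g) z = over_z f z / over_z g z"
    if "z \<in> ball 0 1" for z
    using deriv_Cbeta(1)[OF holf that] deriv_Cbeta(1)[OF holg that] one_minus_notin_nonpos_Reals[OF that]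
    by (auto simp: Cbeta_integrand_def)
  have "0 < Re (exp (\<i> * of_real \<alpha>) * deriv (Cbeta \<beta> f) z / deriv (Cbeta \<beta> g) z)"
    if "z \<in> ball 0 1" for z
    using Re_over_z_quotient_pos[OF f g pos that]
    by (simp only: times_divide_eq_right[symmetric] ratio[OF that])
  then show ?thesis
    unfolding classC_def using Cbeta_in_classA[OF f] Cbeta_in_classK[OF g assms(1,2)] \<alpha> by blast
qed

end
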